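(* Let $W$ be the affine Weyl group of type $A_n^{(1)}$, let $w\in W$ and $j\in\{1,\dots,n\}$. Then (1) $\mathcal{L}_{\Lambda_0}(w)=\mathcal{L}_{\Lambda_0}(\sigma_jw)=\mathcal{L}_{\Lambda_0}(\sigma_1^jw)$; (2) $\mathcal{L}_{\Lambda_0}(wf^j)=\mathcal{L}_{\Lambda_0}(\pi_j(w))$, where $f=[\omega_1]$.
   Context: Affine Kac–Moody setting of type $A_n^{(1)}$: $\mathfrak h^*$ contains simple roots $\alpha_0,\dots,\alpha_n$, the null root $\delta=\sum_{i=0}^n\alpha_i$, the affine fundamental weight $\Lambda_0$; $c=\sum_i\alpha_i^\vee$ is the canonical central element, $\rho^\vee\in\mathfrak h$ satisfies $\langle\alpha_i,\rho^\vee\rangle=1$ for all $0\le i\le n$, and $h=n+1$. The finite part $V_0=\bigoplus_{i=1}^n\mathbb{R}\alpha_i$ is identified with $\{x\in\mathbb{R}^{n+1}\mid\sum x_i=0\}$ via $\alpha_i=\varepsilon_i-\varepsilon_{i+1}$, with standard dot product $(\cdot|\cdot)$ (extended to the standard invariant form on $\mathfrak h^*$). For $x\in V_0$, $t_x(v)=v+\langle v,c\rangle x-((v|x)+\frac12|x|^2\langle v,c\rangle)\delta$. $W_0=\langle s_1,\dots,s_n\rangle\cong S_{n+1}$, $M=V_0\cap\mathbb{Z}^{n+1}$, $W=\langle s_0,\dots,s_n\rangle=T(M)\rtimes W_0$. Fundamental weights $\omega_i=(\varepsilon_1+\dots+\varepsilon_i)-\frac{i}{n+1}(\varepsilon_1+\dots+\varepsilon_{n+1})$,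 $L=\bigoplus_i\mathbb{Z}\omega_i$, extended affine Weyl group $\widehat W=T(L)\rtimes W_0$, fundamental group $F=L/M$. For $j\in\{1,\dots,n\}$, $\sigma_j=t_{\omega_j}w_{0,j}w_0$, where $w_0$ is the longest element of $W_0$ and $w_{0,j}$ the longest element of the parabolic subgroup generated by $\{s_i\mid 1\le i\le n, i\ne j\}$; $\sigma_0=e$. Conjugation by $\sigma_j$ permutes $\{s_0,\dots,s_n\}$, and $\pi_j(w)=\sigma_j^{-1}w\sigma_j\in W$. For $g\in GL(\mathfrak h^* )$, $\mathcal{L}_{\Lambda_0}(g)=\langle\Lambda_0-g\Lambda_0,\rho^\vee\rangle$. The element $wf^j$ of $W\rtimes F$ (with $F$ acting through $[\omega_j]\mapsto\sigma_j$) has atomic length defined as $\mathcal{L}_{\Lambda_0}(wf^j):=\mathcal{L}_{\Lambda_0}(\sigma_j\pi_j(w))$, where $f^j=[\omega_j]$ corresponds to $\sigma_j$. *)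

theory Defs
  imports Main "HOL.Real"
begin

text \<open>Model of \<open>h^*\<close> for type \<open>A_n^{(1)}\<close>: a triple \<open>(x, a, b)\<close> stands for
  \<open>x + a \<Lambda>_0 + b \<delta>\<close>, where \<open>x \<in> V_0 \<subseteq> \<real>^{n+1}\<close> is given by its coordinates
  \<open>x 1, ..., x (n+1)\<close> (other coordinates are irrelevant and left untouched).\<close>

type_synonym hdual = "(nat \<Rightarrow> real) \<times> real \<times> real"

definition ip :: "nat \<Rightarrow> (nat \<Rightarrow> real) \<Rightarrow> (nat \<Rightarrow> real) \<Rightarrow> real" where
  "ip n x y = (\<Sum>k=1..n+1. x k * y k)"

definition eps :: "nat \<Rightarrow> nat \<Rightarrow> real" where
  "eps i = (\<lambda>k. if k = i then 1 else 0)"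

definition theta :: "nat \<Rightarrow> nat \<Rightarrow> real" where
  "theta n = (\<lambda>k. eps 1 k - eps (n+1) k)"

text \<open>standard invariant form: \<open>(\<Lambda>_0|\<delta>) = 1\<close>, \<open>(\<Lambda>_0|\<Lambda>_0) = (\<delta>|\<delta>) = 0\<close>,
  \<open>\<Lambda>_0, \<delta> \<perp> V_0\<close>.\<close>
definition form :: "nat \<Rightarrow> hdual \<Rightarrow> hdual \<Rightarrow> real" where
  "form n v u = (case v of (x, a, b) \<Rightarrow> case u of (y, a', b') \<Rightarrow> ip n x y + a * b' + a' * b)"

definition Lambda0 :: hdual where "Lambda0 = (\<lambda>_. 0, 1, 0)"
definition delta :: hdual where "delta = (\<lambda>_. 0, 0, 1)"

definition hsub :: "hdual \<Rightarrow> hdual \<Rightarrow> hdual" where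
  "hsub v u = (case v of (x, a, b) \<Rightarrow> case u of (y, a', b') \<Rightarrow> (\<lambda>k. x k - y k, a - a', b - b'))"

definition simple_root :: "nat \<Rightarrow> nat \<Rightarrow> hdual" where
  "simple_root n i = (if i = 0 then (\<lambda>k. - theta n k, 0, 1)
                      else (\<lambda>k. eps i k - eps (Suc i) k, 0, 0))"

text \<open>simple reflections \<open>s_i(v) = v - \<langle>v,\<alpha>_i^\<or>\<rangle> \<alpha>_i = v - (v|\<alpha>_i) \<alpha>_i\<close> (simply laced)\<close>
definition refl :: "nat \<Rightarrow> nat \<Rightarrow> hdual \<Rightarrow> hdual" where
  "refl n i v = (let c = form n v (simple_root n i) in
     case v of (x, a, b) \<Rightarrow> case simple_root n i of (y, a', b') \<Rightarrow>
       (\<lambda>k. x k - c * y k, a - c * a', b - c * b'))"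

text \<open>The affine Weyl group \<open>W = \<langle>s_0, ..., s_n\<rangle>\<close> as a group of maps on \<open>h^*\<close>
  (the reflections are involutions, so the monoid generated is the group).\<close>
inductive_set affW :: "nat \<Rightarrow> (hdual \<Rightarrow> hdual) set" for n where
  id: "id \<in> affW n"
| step: "w \<in> affW n \<Longrightarrow> i \<le> n \<Longrightarrow> refl n i \<circ> w \<in> affW n"

text \<open>\<open>t_x(v) = v + \<langle>v,c\<rangle> x - ((v|x) + |x|^2 \<langle>v,c\<rangle>/2) \<delta>\<close>\<close>
definition transl :: "nat \<Rightarrow> (nat \<Rightarrow> real) \<Rightarrow> hdual \<Rightarrow> hdual" where
  "transl n x v = (case v of (y, a, b) \<Rightarrow>
     (\<lambda>k. y k + a * x k, a, b - ip n y x - ip n x x / 2 * a))"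

definition omega :: "nat \<Rightarrow> nat \<Rightarrow> nat \<Rightarrow> real" where
  "omega n j = (\<lambda>k. (if 1 \<le> k \<and> k \<le> j then 1 else 0)
                   - (if 1 \<le> k \<and> k \<le> n+1 then real j / real (n+1) else 0))"

text \<open>longest element \<open>w_0\<close> of \<open>S_{n+1}\<close> (reversal of \<open>1..n+1\<close>) acting on \<open>h^*\<close>\<close>
definition w0_act :: "nat \<Rightarrow> hdual \<Rightarrow> hdual" where
  "w0_act n v = (case v of (y, a, b) \<Rightarrow>
     (\<lambda>k. if 1 \<le> k \<and> k \<le> n+1 then y (n+2-k) else y k, a, b))"

text \<open>longest element \<open>w_{0,j}\<close> of the parabolic subgroup \<open>S_j \<times> S_{n+1-j}\<close>
  (reversal of \<open>1..j\<close> and of \<open>j+1..n+1\<close>) acting on \<open>h^*\<close>\<close>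
definition w0j_act :: "nat \<Rightarrow> nat \<Rightarrow> hdual \<Rightarrow> hdual" where
  "w0j_act n j v = (case v of (y, a, b) \<Rightarrow>
     (\<lambda>k. if 1 \<le> k \<and> k \<le> j then y (j+1-k)
          else if j < k \<and> k \<le> n+1 then y (n+j+2-k) else y k, a, b))"

definition sigma :: "nat \<Rightarrow> nat \<Rightarrow> hdual \<Rightarrow> hdual" where
  "sigma n j = (if j = 0 then id else transl n (omega n j) \<circ> w0j_act n j \<circ> w0_act n)"

definition pi_aut :: "nat \<Rightarrow> nat \<Rightarrow> (hdual \<Rightarrow> hdual) \<Rightarrow> hdual \<Rightarrow> hdual" where
  "pi_aut n j w = inv (sigma n j) \<circ> w \<circ> sigma n j"

text \<open>pairing with \<open>\<rho>^\<or>\<close>: \<open>\<langle>x,\<rho>^\<or>\<rangle> = (x|\<rho>)\<close> on \<open>V_0\<close> with \<open>\<rho> = \<Sum> \<omega>_i\<close>,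
  \<open>\<langle>\<delta>,\<rho>^\<or>\<rangle> = h = n+1\<close>, and the normalisation \<open>\<langle>\<Lambda>_0,\<rho>^\<or>\<rangle> = 0\<close>.\<close>
definition rho :: "nat \<Rightarrow> nat \<Rightarrow> real" where
  "rho n = (\<lambda>k. (real n + 2 - 2 * real k) / 2)"

definition pair_rho_check :: "nat \<Rightarrow> hdual \<Rightarrow> real" where
  "pair_rho_check n v = (case v of (x, a, b) \<Rightarrow> ip n x (rho n) + real (n+1) * b)"

definition atomic_length :: "nat \<Rightarrow> (hdual \<Rightarrow> hdual) \<Rightarrow> real" where
  "atomic_length n g = pair_rho_check n (hsub Lambda0 (g Lambda0))"

text \<open>atomic length of \<open>w f^j\<close> in \<open>W \<rtimes> F\<close>: \<open>\<L>_{\<Lambda>_0}(\<sigma>_j \<pi>_j(w))\<close>\<close>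
definition atomic_length_F :: "nat \<Rightarrow> (hdual \<Rightarrow> hdual) \<Rightarrow> nat \<Rightarrow> real" where
  "atomic_length_F n w j = atomic_length n (sigma n j \<circ> pi_aut n j w)"

end

theory Submission imports Defs begin

text \<open>\<open>\<sigma>\<^sub>j\<close> is a translation composed with two permutations of coordinates, hence an
  isometry of the invariant form, and it fixes \<open>\<rho> + h\<Lambda>\<^sub>0\<close>, the vector representing
  the pairing with \<open>\<rho>\<^sup>\<or>\<close> through the form. So \<open>\<langle>\<sigma>\<^sub>j v, \<rho>\<^sup>\<or>\<rangle> = \<langle>v, \<rho>\<^sup>\<or>\<rangle>\<close>
  for every \<open>v\<close>, whence \<open>\<L>(\<sigma>\<^sub>j g) = \<L>(g)\<close> for every map \<open>g\<close>; (2) is the case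
  \<open>g = \<pi>\<^sub>j(w)\<close>.\<close>

lemma ip_commute: "ip n x y = ip n y x"
  unfolding ip_def by (simp add: mult.commute)

lemma ip_add_left: "ip n (\<lambda>k. x k + y k) z = ip n x z + ip n y z"
  unfolding ip_def by (simp add: distrib_right sum.distrib)

lemma ip_diff_left: "ip n (\<lambda>k. x k - y k) z = ip n x z - ip n y z"
  unfolding ip_def by (simp add: left_diff_distrib sum_subtractf)

lemma ip_scale_left: "ip n (\<lambda>k. c * x k) z = c * ip n x z"
  unfolding ip_def by (simp only: sum_distrib_left mult.assoc)

lemma ip_uminus_left: "ip n (\<lambda>k. - x k) z = - ip n x z"
  unfolding ip_def by (simp add: sum_negf)

lemma ip_permute:
  assumes "bij_betw p {1..n+1} {1..n+1}"
    and "\<forall>k\<in>{1..n+1}. x' k = x (p k)" and "\<forall>k\<in>{1..n+1}. y' k = y (p k)"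
  shows "ip n x' y' = ip n x y"
proof -
  have "ip n x' y' = (\<Sum>k=1..n+1. x (p k) * y (p k))"
    unfolding ip_def using assms(2,3) by (intro sum.cong) auto
  also have "\<dots> = ip n x y"
    unfolding ip_def using sum.reindex_bij_betw[OF assms(1), of "\<lambda>k. x k * y k"] by simp
  finally show ?thesis .
qed

lemma bij_betw_involution:
  assumes "\<forall>a\<in>A. p a \<in> A \<and> p (p a) = a"
  shows "bij_betw p A A"
  by (rule bij_betw_byWitness[where f'=p]) (use assms in auto)

lemma form_transl: "form n (transl n x v) (transl n x u) = form n v u"
proof -
  obtain y a b y' a' b' where v: "v = (y, a, b)" and u: "u = (y', a', b')"
    by (cases v, cases u) auto
  have "ip n (\<lambda>k. y k + a * x k) (\<lambda>k. y' k + a' * x k)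
      = ip n y y' + a' * ip n y x + a * ip n y' x + a * a' * ip n x x"
    by (simp add: ip_add_left ip_scale_left ip_commute[of n _ "\<lambda>k. y' k + a' * x k"])
      (simp add: ip_commute algebra_simps)
  then show ?thesis
    unfolding v u transl_def form_def by (simp add: algebra_simps)
qed

lemma form_w0_act: "form n (w0_act n v) (w0_act n u) = form n v u"
proof -
  have "bij_betw (\<lambda>k. n + 2 - k) {1..n+1} {1..n+1}"
    by (rule bij_betw_involution) auto
  then show ?thesis
    by (cases v, cases u) (auto simp: w0_act_def form_def intro: ip_permute)
qed

lemma form_w0j_act:
  assumes "j \<le> n + 1"
  shows "form n (w0j_act n j v) (w0j_act n j u) = form n v u"
proof -
  have "bij_betw (\<lambda>k. if k \<le> j then j + 1 - k else n + j + 2 - k) {1..n+1} {1..n+1}"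
    by (rule bij_betw_involution) (use assms in auto)
  then show ?thesis
    by (cases v, cases u) (auto simp: w0j_act_def form_def intro: ip_permute)
qed

lemma form_sigma:
  assumes "j \<le> n + 1"
  shows "form n (sigma n j v) (sigma n j u) = form n v u"
  using assms by (simp add: sigma_def form_transl form_w0j_act form_w0_act)

lemma sum_rho_initial: "(\<Sum>k=1..p. rho n k) = real p * (real n + 1 - real p) / 2"
  by (induction p) (simp_all add: rho_def field_simps)

lemma ip_omega_left:
  assumes "j \<le> n + 1"
  shows "ip n (omega n j) y = (\<Sum>k=1..j. y k) - real j / real (n+1) * (\<Sum>k=1..n+1. y k)"
proof -
  have "ip n (omega n j) y
      = (\<Sum>k=1..n+1. (if k \<le> j then y k else 0) - real j / real (n+1) * y k)"
    unfolding ip_def omega_def by (intro sum.cong) (auto simp: algebra_simps)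
  also have "\<dots> = (\<Sum>k=1..n+1. if k \<le> j then y k else 0) - real j / real (n+1) * (\<Sum>k=1..n+1. y k)"
    by (simp only: sum_subtractf sum_distrib_left)
  also have "(\<Sum>k=1..n+1. if k \<le> j then y k else 0) = (\<Sum>k=1..j. y k)"
  proof -
    have "{k \<in> {1..n+1}. k \<le> j} = {1..j}" using assms by auto
    then show ?thesis using sum.inter_filter[of "{1..n+1}" y "\<lambda>k. k \<le> j"] by simp
  qed
  finally show ?thesis .
qed

lemma sum_omega:
  assumes "j \<le> n + 1"
  shows "(\<Sum>k=1..n+1. omega n j k) = 0"
  using ip_omega_left[OF assms, of "\<lambda>_. 1"] by (simp add: ip_def)

lemma sum_omega_initial:
  assumes "j \<le> n + 1"
  shows "(\<Sum>k=1..j. omega n j k) = real j * (1 - real j / real (n+1))"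
proof -
  have "(\<Sum>k=1..j. omega n j k) = (\<Sum>k=1..j. 1 - real j / real (n+1))"
    using assms by (intro sum.cong) (auto simp: omega_def)
  then show ?thesis by simp
qed

lemma ip_omega_omega:
  assumes "j \<le> n + 1"
  shows "ip n (omega n j) (omega n j) = real j * (real n + 1 - real j) / (real n + 1)"
  unfolding ip_omega_left[OF assms] sum_omega[OF assms] sum_omega_initial[OF assms]
  by (simp add: field_simps)

lemma ip_omega_rho:
  assumes "j \<le> n + 1"
  shows "ip n (omega n j) (rho n) = real j * (real n + 1 - real j) / 2"
  unfolding ip_omega_left[OF assms] sum_rho_initial by simp

lemma w0j_act_w0_act_rho:
  assumes "j \<le> n + 1"
  shows "w0j_act n j (w0_act n (rho n, a, b)) = (\<lambda>k. rho n k - real (n+1) * omega n j k, a, b)"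
proof -
  have "fst (w0j_act n j (w0_act n (rho n, a, b))) k = rho n k - real (n+1) * omega n j k" for k
  proof -
    consider "1 \<le> k" "k \<le> j" | "j < k" "k \<le> n + 1" | "k = 0 \<or> n + 1 < k" by linarith
    then show ?thesis
    proof cases
      case 1
      then have "fst (w0j_act n j (w0_act n (rho n, a, b))) k = rho n (n + 1 - j + k)"
        using assms by (auto simp: w0j_act_def w0_act_def)
      also have "\<dots> = rho n k - real (n+1) * omega n j k"
        using 1 assms by (simp add: rho_def omega_def of_nat_diff field_simps)
      finally show ?thesis .
    next
      case 2
      then have "fst (w0j_act n j (w0_act n (rho n, a, b))) k = rho n (k - j)"
        by (auto simp: w0j_act_def w0_act_def)
      also have "\<dots> = rho n k - real (n+1) * omega n j k"
        using 2 by (simp add: rho_def omega_def of_nat_diff field_simps)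
      finally show ?thesis .
    qed (use assms in \<open>auto simp: w0j_act_def w0_act_def omega_def\<close>)
  qed
  then show ?thesis by (simp add: w0j_act_def w0_act_def fun_eq_iff)
qed

definition rho_hat :: "nat \<Rightarrow> hdual" where
  "rho_hat n = (rho n, real (n+1), 0)"

lemma pair_rho_check_eq_form: "pair_rho_check n v = form n v (rho_hat n)"
  by (cases v) (simp add: pair_rho_check_def form_def rho_hat_def)

lemma sigma_rho_hat:
  assumes "j \<le> n + 1"
  shows "sigma n j (rho_hat n) = rho_hat n"
proof (cases "j = 0")
  case False
  \<comment> \<open>the \<open>\<delta>\<close>-coefficient of \<open>t\<^bsub>\<omega>\<^sub>j\<^esub>(\<rho> - h\<omega>\<^sub>j + h\<Lambda>\<^sub>0)\<close> vanishes\<close>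
  have "ip n (\<lambda>k. rho n k - real (n+1) * omega n j k) (omega n j)
      + ip n (omega n j) (omega n j) / 2 * real (n+1) = 0"
    unfolding ip_diff_left ip_scale_left ip_commute[of n "rho n"]
      ip_omega_rho[OF assms] ip_omega_omega[OF assms]
    by (simp add: field_simps)
  then show ?thesis
    using False by (simp add: sigma_def rho_hat_def w0j_act_w0_act_rho[OF assms] transl_def)
qed (simp add: sigma_def)

lemma pair_rho_check_sigma:
  assumes "j \<le> n + 1"
  shows "pair_rho_check n (sigma n j v) = pair_rho_check n v"
  by (metis assms form_sigma sigma_rho_hat pair_rho_check_eq_form)

lemma atomic_length_eq: "atomic_length n g = - pair_rho_check n (g Lambda0)"
  by (cases "g Lambda0")
    (simp add: atomic_length_def pair_rho_check_def hsub_def Lambda0_def ip_uminus_left)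

lemma atomic_length_sigma_comp:
  assumes "j \<le> n + 1"
  shows "atomic_length n (sigma n j \<circ> g) = atomic_length n g"
  by (simp add: atomic_length_eq pair_rho_check_sigma[OF assms])

lemma atomic_length_sigma_funpow_comp:
  assumes "j \<le> n + 1"
  shows "atomic_length n ((sigma n j ^^ m) \<circ> g) = atomic_length n g"
proof (induction m)
  case (Suc m)
  have "(sigma n j ^^ Suc m) \<circ> g = sigma n j \<circ> ((sigma n j ^^ m) \<circ> g)"
    by (simp add: comp_assoc)
  then show ?case
    by (simp only: atomic_length_sigma_comp[OF assms] Suc.IH)
qed simp

theorem theorem4p7:
  fixes n j :: nat and w :: "hdual \<Rightarrow> hdual"
  assumes "n \<ge> 1" and "w \<in> affW n" and "1 \<le> j" and "j \<le> n"
  shows "atomic_length n w = atomic_length n (sigma n j \<circ> w)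
       \<and> atomic_length n (sigma n j \<circ> w) = atomic_length n ((sigma n 1 ^^ j) \<circ> w)
       \<and> atomic_length_F n w j = atomic_length n (pi_aut n j w)"
proof -
  have j: "j \<le> n + 1" using assms(4) by simp
  have "atomic_length n (sigma n j \<circ> w) = atomic_length n w"
    by (rule atomic_length_sigma_comp[OF j])
  moreover have "atomic_length n ((sigma n 1 ^^ j) \<circ> w) = atomic_length n w"
    by (rule atomic_length_sigma_funpow_comp) simp
  moreover have "atomic_length_F n w j = atomic_length n (pi_aut n j w)"
    unfolding atomic_length_F_def by (rule atomic_length_sigma_comp[OF j])
  ultimately show ?thesis by simp
qed

end
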